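(* Let $t>0$ be an integer. There is a constant $C_t$ such that the following holds. Let $G=(V,E,<)$ be an ordered graph with $|V|\ge 2$ that does not contain two $t$-element vertex subsets $S,T$ such that every $s\in S$ and $w\in T$ form a double cherry. Then $|E|\le C_t|V|\log|V|$.
   Context: An ordered graph is a graph with a linear order on its vertices. Two distinct vertices of an ordered graph form a double cherry if either they are adjacent, or they can be named $u,v$ so that there are vertices $u_1,u_2,v_1,v_2$ with $u_1<u<u_2<v_1<v<v_2$ and edges $(u,v_1),(u,v_2),(v,u_1),(v,u_2)$ in the graph. *)

theory Defs
  imports Complex_Main
begin

text \<open>An ordered graph: finite vertex set V of naturals (ordered by the usual order on nat,
  every finite linearly ordered set is order-isomorphic to such a set), and an edge relation E
  which is symmetric, irreflexive and contained in V x V.\<close>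

definition ordered_graph :: "nat set \<Rightarrow> (nat \<Rightarrow> nat \<Rightarrow> bool) \<Rightarrow> bool" where
  "ordered_graph V E \<longleftrightarrow> finite V \<and> (\<forall>u v. E u v \<longrightarrow> u \<in> V \<and> v \<in> V)
     \<and> (\<forall>u v. E u v \<longrightarrow> E v u) \<and> (\<forall>v. \<not> E v v)"

definition edges :: "(nat \<Rightarrow> nat \<Rightarrow> bool) \<Rightarrow> nat set set" where
  "edges E = {{u, v} | u v. E u v}"

definition dc_witness :: "(nat \<Rightarrow> nat \<Rightarrow> bool) \<Rightarrow> nat \<Rightarrow> nat \<Rightarrow> bool" where
  "dc_witness E u v \<longleftrightarrow> (\<exists>u1 u2 v1 v2. u1 < u \<and> u < u2 \<and> u2 < v1 \<and> v1 < v \<and> v < v2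
      \<and> E u v1 \<and> E u v2 \<and> E v u1 \<and> E v u2)"

definition double_cherry :: "(nat \<Rightarrow> nat \<Rightarrow> bool) \<Rightarrow> nat \<Rightarrow> nat \<Rightarrow> bool" where
  "double_cherry E x y \<longleftrightarrow> x \<noteq> y \<and> (E x y \<or> dc_witness E x y \<or> dc_witness E y x)"

end

theory Submission
  imports Defs
begin

(* Divide and conquer: split the vertices by the order into an initial half A and a final half B
   and recurse, so it suffices to bound the edges between A and B by O(t^2 (|A| + |B|)).
   Call a pair a \<in> A, b \<in> B inner if a lies strictly between two neighbours of b in A and
   b strictly between two neighbours of a in B.  Every inner pair, adjacent or not, is a double
   cherry, and all but 2(|A| + |B|) cross edges are inner.  For fixed a, the inner partners of a
   form an interval of the active set {b. a lies strictly between two neighbours of b}; an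
   interval with c elements contains c - t + 1 runs of t consecutive elements ("blocks").  As a
   sweeps from left to right the active set changes one element at a time, so at most 2t|B|
   distinct blocks ever occur, and none of them is shared by t vertices a, as that would give a
   t by t biclique of double cherries.  Double counting gives sum_a |inner(a)| <= (t - 1)|A| + 2t(t - 1)|B|. *)

section \<open>Blocks of consecutive elements\<close>

definition convex_within :: "'a::linorder set \<Rightarrow> 'a set \<Rightarrow> bool" where
  "convex_within X W \<longleftrightarrow> (\<forall>y\<in>X. \<forall>p\<in>W. \<forall>q\<in>W. p \<le> y \<longrightarrow> y \<le> q \<longrightarrow> y \<in> W)"

definition blocks :: "nat \<Rightarrow> 'a::linorder set \<Rightarrow> 'a set set" where
  "blocks t X = {W. W \<subseteq> X \<and> card W = t \<and> convex_within X W}"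

lemma finite_blocks: "finite X \<Longrightarrow> finite (blocks t X)"
  unfolding blocks_def by (rule finite_subset[of _ "Pow X"]) auto

lemma blocks_mono_convex:
  assumes "Y \<subseteq> X" "convex_within X Y"
  shows "blocks t Y \<subseteq> blocks t X"
  using assms unfolding blocks_def convex_within_def by (auto 5 0)

lemma blocks_insert_greater:
  assumes "\<forall>a\<in>A. a < b"
  shows "blocks t A \<subseteq> blocks t (insert b A)"
proof
  fix W assume W: "W \<in> blocks t A"
  have "y \<in> W" if "y \<in> insert b A" "p \<in> W" "q \<in> W" "p \<le> y" "y \<le> q" for y p q
  proof -
    have "q < b" using \<open>q \<in> W\<close> W assms unfolding blocks_def by auto
    then have "y \<in> A" using that by auto
    then show ?thesis using that W unfolding blocks_def convex_within_def by blast
  qed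
  then show "W \<in> blocks t (insert b A)" using W unfolding blocks_def convex_within_def by auto
qed

lemma exists_upper_subset:
  fixes X :: "'a::linorder set"
  assumes "finite X" "t \<le> card X"
  shows "\<exists>W\<subseteq>X. card W = t \<and> (\<forall>y\<in>X - W. \<forall>w\<in>W. y < w)"
  using assms(2)
proof (induction t)
  case 0
  then show ?case by (intro exI[of _ "{}"]) simp
next
  case (Suc t)
  then obtain W where W: "W \<subseteq> X" "card W = t" "\<forall>y\<in>X - W. \<forall>w\<in>W. y < w" by auto
  have fin: "finite (X - W)" using assms(1) by simp
  have "X - W \<noteq> {}"
  proof
    assume "X - W = {}"
    then have "X = W" using W(1) by auto
    then show False using W(2) Suc.prems by simp
  qed
  define m where "m = Max (X - W)"
  have m: "m \<in> X - W" "\<forall>y\<in>X - W. y \<le> m"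
    unfolding m_def using Max_in[OF fin \<open>X - W \<noteq> {}\<close>] fin by auto
  have "insert m W \<subseteq> X" "card (insert m W) = Suc t"
    using W m assms(1) by (auto simp: finite_subset)
  moreover have "\<forall>y\<in>X - insert m W. \<forall>w\<in>insert m W. y < w"
    using W(3) m(2) by (auto simp: le_less)
  ultimately show ?case by blast
qed

lemma card_le_card_blocks:
  assumes "finite X" "0 < t"
  shows "card X \<le> (t - 1) + card (blocks t X)"
  using assms(1)
proof (induction X rule: finite_linorder_max_induct)
  case empty
  then show ?case by simp
next
  case (insert b A)
  show ?case
  proof (cases "card (insert b A) \<le> t - 1")
    case False
    then have "t \<le> card (insert b A)" by linarith
    then obtain W where W: "W \<subseteq> insert b A" "card W = t" "\<forall>y\<in>insert b A - W. \<forall>w\<in>W. y < w"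
      using exists_upper_subset[OF finite.insertI[OF insert.hyps(1)], of t] by auto
    have "b \<in> W"
    proof (rule ccontr)
      assume "b \<notin> W"
      then have "\<forall>w\<in>W. b < w" using W(3) by auto
      moreover obtain w where "w \<in> W" using W(2) \<open>0 < t\<close> by fastforce
      ultimately show False using W(1) insert.hyps(2) by fastforce
    qed
    have "y \<in> W" if "y \<in> insert b A" "p \<in> W" "p \<le> y" for y p
      using that W(3) by (meson DiffI leD)
    then have "W \<in> blocks t (insert b A)"
      using W unfolding blocks_def convex_within_def by blast
    moreover have "W \<notin> blocks t A" using \<open>b \<in> W\<close> insert.hyps(2) unfolding blocks_def by auto
    ultimately have "blocks t A \<subset> blocks t (insert b A)"
      using blocks_insert_greater[OF insert.hyps(2)] by blast
    then have "card (blocks t A) < card (blocks t (insert b A))"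
      using finite_blocks insert.hyps(1) by (meson finite_insert psubset_card_mono)
    moreover have "b \<notin> A" using insert.hyps(2) by auto
    ultimately show ?thesis using insert.IH insert.hyps(1) by simp
  qed simp
qed

lemma blocks_eq_if_Min_eq:
  fixes X :: "'a::linorder set"
  assumes "finite X" "W1 \<in> blocks t X" "W2 \<in> blocks t X" "Min W1 = Min W2"
  shows "W1 = W2"
proof -
  have fin: "finite W" if "W \<in> blocks t X" for W
    using that assms(1) unfolding blocks_def by (auto intro: finite_subset)
  have sub: "A \<subseteq> B" if A: "A \<in> blocks t X" and B: "B \<in> blocks t X"
    and eq: "Min A = Min B" and le: "Max A \<le> Max B" for A B
  proof
    fix y assume "y \<in> A"
    have "B \<noteq> {}" using A B \<open>y \<in> A\<close> fin[OF A] unfolding blocks_def by auto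
    then have "Min B \<in> B" "Max B \<in> B" using fin[OF B] by simp_all
    moreover have "Min B \<le> y" "y \<le> Max B" using fin[OF A] \<open>y \<in> A\<close> eq le by (metis Min_le, metis Max_ge order_trans)
    ultimately show "y \<in> B" using A B \<open>y \<in> A\<close> unfolding blocks_def convex_within_def by blast
  qed
  have "card W1 = card W2" using assms(2,3) unfolding blocks_def by simp
  then show ?thesis
    using sub[OF assms(2,3,4)] sub[OF assms(3,2) assms(4)[symmetric]] fin assms(2,3)
    by (metis card_subset_eq nle_le)
qed

definition straddling_blocks :: "nat \<Rightarrow> 'a::linorder set \<Rightarrow> 'a \<Rightarrow> 'a set set" where
  "straddling_blocks t X p = {W \<in> blocks t X. (\<exists>q\<in>W. q \<le> p) \<and> (\<exists>q\<in>W. p \<le> q)}"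

lemma card_straddling_blocks_le:
  fixes X :: "'a::linorder set"
  assumes "finite X"
  shows "card (straddling_blocks t X p) \<le> t"
proof -
  let ?F = "straddling_blocks t X p"
  let ?M = "{m\<in>X. m \<le> p \<and> card {y\<in>X. m \<le> y \<and> y \<le> p} \<le> t}"
  have fin: "finite W" if "W \<in> ?F" for W
    using that assms unfolding straddling_blocks_def blocks_def by (auto intro: finite_subset)
  have "inj_on Min ?F"
    using blocks_eq_if_Min_eq[OF assms] unfolding straddling_blocks_def by (auto intro: inj_onI)
  moreover have "Min ` ?F \<subseteq> ?M"
  proof
    fix m assume "m \<in> Min ` ?F"
    then obtain W where W: "W \<in> ?F" and m: "m = Min W" by auto
    obtain q1 q2 where q: "q1 \<in> W" "q1 \<le> p" "q2 \<in> W" "p \<le> q2"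
      using W unfolding straddling_blocks_def by auto
    have "m \<in> W" "m \<le> q1" using m fin[OF W] q(1) by (auto intro: Min_in)
    moreover have "{y\<in>X. m \<le> y \<and> y \<le> p} \<subseteq> W"
      using W \<open>m \<in> W\<close> q(3,4) unfolding straddling_blocks_def blocks_def convex_within_def
      by (auto intro: order_trans)
    then have "card {y\<in>X. m \<le> y \<and> y \<le> p} \<le> t"
      using card_mono[OF fin[OF W]] W unfolding straddling_blocks_def blocks_def by auto
    ultimately show "m \<in> ?M"
      using W q(2) unfolding straddling_blocks_def blocks_def by auto
  qed
  moreover have "card ?M \<le> t"
  proof (cases "?M = {}")
    case False
    define m0 where "m0 = Min ?M"
    have fin_M: "finite ?M" using assms by simp
    have "m0 \<in> ?M" unfolding m0_def by (rule Min_in[OF fin_M False])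
    then have "card {y\<in>X. m0 \<le> y \<and> y \<le> p} \<le> t" by simp
    moreover have "?M \<subseteq> {y\<in>X. m0 \<le> y \<and> y \<le> p}"
      using fin_M unfolding m0_def by auto
    then have "card ?M \<le> card {y\<in>X. m0 \<le> y \<and> y \<le> p}"
      using assms by (intro card_mono) auto
    ultimately show ?thesis by linarith
  qed (metis card.empty le0)
  ultimately show ?thesis using card_inj_on_le[of Min ?F ?M] assms by simp
qed

lemma card_blocks_of_active_le:
  fixes B :: "'a::linorder set" and lo hi :: "'a \<Rightarrow> nat"
  assumes "finite B" "0 < t"
  shows "card (\<Union>x. blocks t {b\<in>B. lo b < x \<and> x < hi b}) \<le> 2 * t * card B"
proof -
  define A where "A x = {b\<in>B. lo b < x \<and> x < hi b}" for x
  have fin_A: "finite (A x)" for x using assms(1) unfolding A_def by simp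
  let ?S = "\<lambda>b. straddling_blocks t (A (Suc (lo b))) b \<union> straddling_blocks t (A (hi b)) b"
  txt \<open>A block first occurring in A x is not a block of A (x - 1): either one of its elements
    enters at x or a gap element leaves at x; either way the block straddles that element.\<close>
  have "(\<Union>x. blocks t (A x)) \<subseteq> (\<Union>b\<in>B. ?S b)"
  proof
    fix W assume "W \<in> (\<Union>x. blocks t (A x))"
    then obtain x where x: "W \<in> blocks t (A x)" and least: "\<And>y. y < x \<Longrightarrow> W \<notin> blocks t (A y)"
      using exists_least_iff[of "\<lambda>x. W \<in> blocks t (A x)"] by auto
    have "W \<noteq> {}" using x assms(2) unfolding blocks_def by auto
    then have "x \<noteq> 0" using x unfolding blocks_def A_def by auto
    then obtain z where z: "x = Suc z" using not0_implies_Suc by blast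
    have "W \<notin> blocks t (A z)" using least z by simp
    then have "\<not> W \<subseteq> A z \<or> \<not> convex_within (A z) W" using x unfolding blocks_def by simp
    then consider (entering) w where "w \<in> W" "w \<notin> A z"
      | (leaving) y p q where "y \<in> A z" "p \<in> W" "q \<in> W" "p \<le> y" "y \<le> q" "y \<notin> W"
      unfolding convex_within_def subset_iff by blast
    then show "W \<in> (\<Union>b\<in>B. ?S b)"
    proof cases
      case entering
      then have "w \<in> B" "lo w = z" using x z unfolding blocks_def A_def by auto
      then show ?thesis using x z entering unfolding straddling_blocks_def by blast
    next
      case leaving
      then have "y \<notin> A x" using x unfolding blocks_def convex_within_def by blast
      then have "y \<in> B" "hi y = x" using leaving(1) z unfolding A_def by auto
      then show ?thesis using x leaving unfolding straddling_blocks_def by blast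
    qed
  qed
  moreover have "finite (\<Union>b\<in>B. ?S b)"
    using assms(1) finite_blocks[OF fin_A] unfolding straddling_blocks_def by auto
  ultimately have "card (\<Union>x. blocks t (A x)) \<le> card (\<Union>b\<in>B. ?S b)" by (rule card_mono[rotated])
  also have "\<dots> \<le> (\<Sum>b\<in>B. card (?S b))" by (rule card_UN_le[OF assms(1)])
  also have "\<dots> \<le> (\<Sum>b\<in>B. 2 * t)"
  proof (rule sum_mono)
    fix b
    have "card (?S b) \<le> card (straddling_blocks t (A (Suc (lo b))) b) + card (straddling_blocks t (A (hi b)) b)"
      by (rule card_Un_le)
    then show "card (?S b) \<le> 2 * t"
      using card_straddling_blocks_le[OF fin_A, of t "Suc (lo b)" b]
        card_straddling_blocks_le[OF fin_A, of t "hi b" b] by linarith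
  qed
  finally show ?thesis unfolding A_def by (simp add: mult.commute)
qed

section \<open>Edges between two ordered halves\<close>

lemma sum_card_le_by_blocks:
  assumes "finite A" "finite \<B>" "0 < t" "\<And>a. a \<in> A \<Longrightarrow> finite (C a)"
    and blocks_in: "\<And>a. a \<in> A \<Longrightarrow> blocks t (C a) \<subseteq> \<B>"
    and rare: "\<And>W. W \<in> \<B> \<Longrightarrow> card {a\<in>A. W \<in> blocks t (C a)} < t"
  shows "(\<Sum>a\<in>A. card (C a)) \<le> (t - 1) * card A + (t - 1) * card \<B>"
proof -
  have "(\<Sum>a\<in>A. card (C a)) \<le> (\<Sum>a\<in>A. (t - 1) + card (blocks t (C a)))"
    using card_le_card_blocks assms(3,4) by (intro sum_mono) auto
  also have "\<dots> = (t - 1) * card A + (\<Sum>a\<in>A. card {W\<in>\<B>. W \<in> blocks t (C a)})"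
    using blocks_in by (simp add: sum.distrib Int_absorb1 flip: Collect_conj_eq Int_def)
  also have "(\<Sum>a\<in>A. card {W\<in>\<B>. W \<in> blocks t (C a)}) = (\<Sum>W\<in>\<B>. card {a\<in>A. W \<in> blocks t (C a)})"
    by (rule sum_multicount_gen[OF assms(1,2)]) simp
  also have "\<dots> \<le> (\<Sum>W\<in>\<B>. t - 1)"
    by (rule sum_mono) (use rare in \<open>fastforce simp: less_Suc_eq_le\<close>)
  finally show ?thesis by (simp add: mult.commute)
qed

definition strictly_inside :: "'a::linorder set \<Rightarrow> 'a \<Rightarrow> bool" where
  "strictly_inside S x \<longleftrightarrow> (\<exists>p\<in>S. \<exists>q\<in>S. p < x \<and> x < q)"

lemma strictly_inside_iff_Min_Max:
  fixes S :: "'a::linorder set"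
  assumes "finite S"
  shows "strictly_inside S x \<longleftrightarrow> S \<noteq> {} \<and> Min S < x \<and> x < Max S"
proof
  assume "strictly_inside S x"
  then obtain p q where "p \<in> S" "q \<in> S" "p < x" "x < q" unfolding strictly_inside_def by blast
  then show "S \<noteq> {} \<and> Min S < x \<and> x < Max S"
    using Min_le[OF assms \<open>p \<in> S\<close>] Max_ge[OF assms \<open>q \<in> S\<close>] by auto
next
  assume "S \<noteq> {} \<and> Min S < x \<and> x < Max S"
  then show "strictly_inside S x" using assms unfolding strictly_inside_def by (meson Max_in Min_in)
qed

lemma Min_or_Max_if_not_strictly_inside:
  fixes S :: "'a::linorder set"
  assumes "finite S" "x \<in> S" "\<not> strictly_inside S x"
  shows "x = Min S \<or> x = Max S"
  using assms strictly_inside_iff_Min_Max[OF assms(1)]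
  by (metis Max_ge Min_le empty_iff order_le_less)

lemma convex_within_strictly_inside: "convex_within X {y\<in>X. strictly_inside S y}"
  unfolding convex_within_def strictly_inside_def by (blast intro: less_le_trans le_less_trans)

definition has_dc_biclique :: "(nat \<Rightarrow> nat \<Rightarrow> bool) \<Rightarrow> nat \<Rightarrow> nat set \<Rightarrow> nat set \<Rightarrow> bool" where
  "has_dc_biclique E t A B \<longleftrightarrow> (\<exists>S T. S \<subseteq> A \<and> T \<subseteq> B \<and> card S = t \<and> card T = t \<and>
     (\<forall>s\<in>S. \<forall>w\<in>T. double_cherry E s w))"

lemma has_dc_biclique_mono:
  assumes "has_dc_biclique E t A B" "A \<subseteq> A'" "B \<subseteq> B'"
  shows "has_dc_biclique E t A' B'"
proof -
  obtain S T where "S \<subseteq> A" "T \<subseteq> B" "card S = t" "card T = t" "\<forall>s\<in>S. \<forall>w\<in>T. double_cherry E s w"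
    using assms(1) unfolding has_dc_biclique_def by blast
  then show ?thesis using assms(2,3) unfolding has_dc_biclique_def by (intro exI[of _ S] exI[of _ T]) auto
qed

lemma double_cherry_if_strictly_inside:
  assumes sym: "\<And>u v. E u v \<Longrightarrow> E v u" and separated: "\<forall>a\<in>A. \<forall>b\<in>B. a < b"
    and "strictly_inside {a'\<in>A. E a' b} a" "strictly_inside {b'\<in>B. E a b'} b"
  shows "double_cherry E a b"
proof -
  obtain u1 u2 v1 v2 where "u1 < a" "a < u2" "v1 < b" "b < v2" "u2 \<in> A" "v1 \<in> B"
    "E u1 b" "E u2 b" "E a v1" "E a v2"
    using assms(3,4) unfolding strictly_inside_def by blast
  moreover have "u2 < v1" using separated \<open>u2 \<in> A\<close> \<open>v1 \<in> B\<close> by blast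
  ultimately have "dc_witness E a b"
    unfolding dc_witness_def using sym by (meson order.strict_trans)
  moreover have "a \<noteq> b" using \<open>a < u2\<close> \<open>u2 < v1\<close> \<open>v1 < b\<close> by simp
  ultimately show ?thesis unfolding double_cherry_def by blast
qed

lemma card_two_images_le: "finite X \<Longrightarrow> card (f ` X \<union> g ` X) \<le> 2 * card X"
  using card_Un_le[of "f ` X" "g ` X"] card_image_le[of X f] card_image_le[of X g] by linarith

definition inner_partners :: "(nat \<Rightarrow> nat \<Rightarrow> bool) \<Rightarrow> nat set \<Rightarrow> nat set \<Rightarrow> nat \<Rightarrow> nat set" where
  "inner_partners E A B a =
     {b\<in>B. strictly_inside {a'\<in>A. E a' b} a \<and> strictly_inside {b'\<in>B. E a b'} b}"

lemma sum_card_inner_partners_le: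
  assumes fin: "finite A" "finite B" and "0 < t" and sym: "\<And>u v. E u v \<Longrightarrow> E v u"
    and separated: "\<forall>a\<in>A. \<forall>b\<in>B. a < b" and no_biclique: "\<not> has_dc_biclique E t A B"
  shows "(\<Sum>a\<in>A. card (inner_partners E A B a)) \<le> (t - 1) * card A + (t - 1) * (2 * t * card B)"
proof -
  define N where "N b = {a'\<in>A. E a' b}" for b
  \<comment> \<open>Restricting to nonempty N b avoids the unspecified Min {} and Max {}.\<close>
  define active where "active x = {b\<in>{b\<in>B. N b \<noteq> {}}. Min (N b) < x \<and> x < Max (N b)}" for x
  let ?\<B> = "\<Union>x. blocks t (active x)"
  have "card ?\<B> \<le> 2 * t * card {b\<in>B. N b \<noteq> {}}"
    unfolding active_def using fin(2) \<open>0 < t\<close> by (intro card_blocks_of_active_le) auto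
  also have "\<dots> \<le> 2 * t * card B" using fin(2) by (intro mult_le_mono2 card_mono) auto
  finally have card_\<B>: "card ?\<B> \<le> 2 * t * card B" .
  have fin_N: "finite (N b)" for b using fin(1) unfolding N_def by simp
  have active_eq: "active x = {b\<in>B. strictly_inside (N b) x}" for x
    unfolding active_def by (auto simp: strictly_inside_iff_Min_Max[OF fin_N])
  have inner_eq: "inner_partners E A B a = {b\<in>active a. strictly_inside {b'\<in>B. E a b'} b}" for a
    unfolding inner_partners_def active_eq N_def by auto
  have blocks_in: "blocks t (inner_partners E A B a) \<subseteq> ?\<B>" for a
    using blocks_mono_convex[OF _ convex_within_strictly_inside] unfolding inner_eq by blast
  have rare: "card {a\<in>A. W \<in> blocks t (inner_partners E A B a)} < t" if "W \<in> ?\<B>" for W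
  proof (rule ccontr)
    assume "\<not> ?thesis"
    then obtain S where S: "S \<subseteq> {a\<in>A. W \<in> blocks t (inner_partners E A B a)}" "card S = t"
      by (meson not_less obtain_subset_with_card_n)
    have "W \<subseteq> B" "card W = t" using that unfolding active_eq blocks_def by auto
    moreover have "double_cherry E s w" if "s \<in> S" "w \<in> W" for s w
    proof -
      have "w \<in> inner_partners E A B s" using that S(1) unfolding blocks_def by blast
      then show ?thesis
        unfolding inner_partners_def using double_cherry_if_strictly_inside[OF sym separated] by simp
    qed
    ultimately have "has_dc_biclique E t A B"
      using S unfolding has_dc_biclique_def by (intro exI[of _ S] exI[of _ W]) auto
    with no_biclique show False by contradiction
  qed
  have "finite ?\<B>"
    by (rule finite_subset[of _ "Pow B"]) (use fin(2) in \<open>auto simp: active_eq blocks_def\<close>)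
  moreover have "finite (inner_partners E A B a)" for a
    using fin(2) unfolding inner_partners_def by simp
  ultimately have "(\<Sum>a\<in>A. card (inner_partners E A B a)) \<le> (t - 1) * card A + (t - 1) * card ?\<B>"
    using sum_card_le_by_blocks[OF fin(1) _ \<open>0 < t\<close> _ blocks_in rare] by blast
  then show ?thesis using card_\<B> by (meson add_left_mono mult_le_mono2 order_trans)
qed

lemma card_cross_edges_le:
  assumes fin: "finite A" "finite B" and "0 < t" and sym: "\<And>u v. E u v \<Longrightarrow> E v u"
    and separated: "\<forall>a\<in>A. \<forall>b\<in>B. a < b" and no_biclique: "\<not> has_dc_biclique E t A B"
  shows "card {(a, b). a \<in> A \<and> b \<in> B \<and> E a b} \<le> (2 * t * t + 2) * (card A + card B)"
proof -
  define N1 where "N1 b = {a\<in>A. E a b}" for b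
  define N2 where "N2 a = {b\<in>B. E a b}" for a
  let ?inner = "SIGMA a:A. inner_partners E A B a"
  let ?extremal = "((\<lambda>b. (Min (N1 b), b)) ` B \<union> (\<lambda>b. (Max (N1 b), b)) ` B)
    \<union> ((\<lambda>a. (a, Min (N2 a))) ` A \<union> (\<lambda>a. (a, Max (N2 a))) ` A)"
  have "(a, b) \<in> ?inner \<union> ?extremal" if ab: "a \<in> A" "b \<in> B" "E a b" for a b
  proof (cases "(a, b) \<in> ?extremal")
    case False
    have "a \<in> N1 b" "b \<in> N2 a" "finite (N1 b)" "finite (N2 a)"
      using ab fin unfolding N1_def N2_def by auto
    moreover have "\<not> (a = Min (N1 b) \<or> a = Max (N1 b))" "\<not> (b = Min (N2 a) \<or> b = Max (N2 a))"
      using False ab by auto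
    ultimately have "strictly_inside (N1 b) a" "strictly_inside (N2 a) b"
      using Min_or_Max_if_not_strictly_inside by metis+
    then show ?thesis using ab unfolding inner_partners_def N1_def N2_def by simp
  qed simp
  then have "{(a, b). a \<in> A \<and> b \<in> B \<and> E a b} \<subseteq> ?inner \<union> ?extremal" by auto
  moreover have "finite (?inner \<union> ?extremal)" using fin unfolding inner_partners_def by auto
  ultimately have "card {(a, b). a \<in> A \<and> b \<in> B \<and> E a b} \<le> card (?inner \<union> ?extremal)"
    by (rule card_mono[rotated])
  also have "\<dots> \<le> card ?inner + card ?extremal" by (rule card_Un_le)
  also have "card ?extremal \<le> 2 * card B + 2 * card A"
    using card_Un_le[THEN order_trans] card_two_images_le fin by (meson add_mono)
  also have "card ?inner = (\<Sum>a\<in>A. card (inner_partners E A B a))"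
    using fin unfolding inner_partners_def by simp
  also have "\<dots> \<le> (t - 1) * card A + (t - 1) * (2 * t * card B)"
    using sum_card_inner_partners_le[OF assms] .
  also have "\<dots> \<le> 2 * t * t * card A + 2 * t * t * card B"
  proof (intro add_mono)
    have "t - 1 \<le> 2 * t * t" using le_square[of t] by linarith
    then show "(t - 1) * card A \<le> 2 * t * t * card A" by (rule mult_le_mono1)
    have "(t - 1) * (2 * t) \<le> t * (2 * t)" by (rule mult_le_mono1) simp
    then show "(t - 1) * (2 * t * card B) \<le> 2 * t * t * card B"
      by (metis mult.assoc mult.commute mult_le_mono1)
  qed
  finally show ?thesis by (simp add: algebra_simps)
qed

section \<open>Divide and conquer\<close>

lemma split_ordered_halves:
  fixes W :: "'a::linorder set"
  assumes "finite W"
  obtains W1 W2 where "W = W1 \<union> W2" "\<forall>a\<in>W1. \<forall>b\<in>W2. a < b"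
    "card W1 = card W div 2" "card W2 = card W - card W div 2"
proof
  define xs where "xs = sorted_list_of_set W"
  have xs: "sorted_wrt (<) xs" "distinct xs" "set xs = W" "length xs = card W"
    unfolding xs_def using assms by auto
  show "W = set (take (card W div 2) xs) \<union> set (drop (card W div 2) xs)"
    using xs(3) by (metis append_take_drop_id set_append)
  show "\<forall>a\<in>set (take (card W div 2) xs). \<forall>b\<in>set (drop (card W div 2) xs). a < b"
    using xs(1) by (metis append_take_drop_id sorted_wrt_append)
  show "card (set (take (card W div 2) xs)) = card W div 2"
    "card (set (drop (card W div 2) xs)) = card W - card W div 2"
    using xs(2,4) by (simp_all add: distinct_card)
qed

lemma card_edges_within_Un_le:
  assumes "finite A" "finite B" "\<And>u v. E u v \<Longrightarrow> E v u"
  shows "card {e \<in> edges E. e \<subseteq> A \<union> B}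
    \<le> card {e \<in> edges E. e \<subseteq> A} + card {e \<in> edges E. e \<subseteq> B} + card {(a, b). a \<in> A \<and> b \<in> B \<and> E a b}"
proof -
  let ?P = "{(a, b). a \<in> A \<and> b \<in> B \<and> E a b}"
  have "{e \<in> edges E. e \<subseteq> A \<union> B}
      \<subseteq> ({e \<in> edges E. e \<subseteq> A} \<union> {e \<in> edges E. e \<subseteq> B}) \<union> (\<lambda>(a, b). {a, b}) ` ?P"
    using assms(3) unfolding edges_def by auto
  moreover have "finite ?P" using assms(1,2) by (auto intro: finite_subset[of _ "A \<times> B"])
  moreover have "finite {e \<in> edges E. e \<subseteq> X}" if "finite X" for X
    using that by (auto intro: finite_subset[of _ "Pow X"])
  ultimately have "card {e \<in> edges E. e \<subseteq> A \<union> B}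
      \<le> card ({e \<in> edges E. e \<subseteq> A} \<union> {e \<in> edges E. e \<subseteq> B}) + card ((\<lambda>(a, b). {a, b}) ` ?P)"
    using assms(1,2) by (meson card_Un_le card_mono finite_UnI finite_imageI order_trans)
  then show ?thesis
    using card_Un_le[of "{e \<in> edges E. e \<subseteq> A}" "{e \<in> edges E. e \<subseteq> B}"]
      card_image_le[OF \<open>finite ?P\<close>, of "\<lambda>(a, b). {a, b}"]
    by linarith
qed

lemma card_edges_within_le:
  assumes "finite W" "0 < t" and sym: "\<And>u v. E u v \<Longrightarrow> E v u" and irrefl: "\<And>v. \<not> E v v"
    and "\<not> has_dc_biclique E t W W" "card W \<le> 2 ^ k"
  shows "card {e \<in> edges E. e \<subseteq> W} \<le> (2 * t * t + 2) * card W * k"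
  using assms(1,5,6)
proof (induction k arbitrary: W)
  case 0
  have no_edges: "{e \<in> edges E. e \<subseteq> W} = {}"
  proof (rule ccontr)
    assume "{e \<in> edges E. e \<subseteq> W} \<noteq> {}"
    then obtain u v where "E u v" "{u, v} \<subseteq> W" unfolding edges_def by auto
    moreover have "u \<noteq> v" using \<open>E u v\<close> irrefl by auto
    ultimately have "card {u, v} = 2" "card {u, v} \<le> card W" using card_mono[OF 0(1), of "{u, v}"] by auto
    then show False using 0(3) by simp
  qed
  show ?case unfolding no_edges by simp
next
  case (Suc k)
  let ?K = "2 * t * t + 2"
  obtain W1 W2 where W: "W = W1 \<union> W2" and separated: "\<forall>a\<in>W1. \<forall>b\<in>W2. a < b"
    and card_W1: "card W1 = card W div 2" and card_W2: "card W2 = card W - card W div 2"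
    using split_ordered_halves[OF Suc.prems(1)] by blast
  have fin: "finite W1" "finite W2" using W Suc.prems(1) by auto
  have no_biclique: "\<not> has_dc_biclique E t A B" if "A \<subseteq> W" "B \<subseteq> W" for A B
    using Suc.prems(2) has_dc_biclique_mono that by blast
  have "card W1 \<le> 2 ^ k" "card W2 \<le> 2 ^ k" using Suc.prems(3) card_W1 card_W2 by simp_all
  then have IH: "card {e \<in> edges E. e \<subseteq> W1} \<le> ?K * card W1 * k"
      "card {e \<in> edges E. e \<subseteq> W2} \<le> ?K * card W2 * k"
    using Suc.IH fin no_biclique W by simp_all
  have "card {e \<in> edges E. e \<subseteq> W}
      \<le> card {e \<in> edges E. e \<subseteq> W1} + card {e \<in> edges E. e \<subseteq> W2}
        + card {(a, b). a \<in> W1 \<and> b \<in> W2 \<and> E a b}"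
    unfolding W by (rule card_edges_within_Un_le[OF fin sym])
  also have "\<dots> \<le> ?K * card W1 * k + ?K * card W2 * k + ?K * (card W1 + card W2)"
    using IH card_cross_edges_le[OF fin \<open>0 < t\<close> sym separated] no_biclique W by (intro add_mono) auto
  also have "\<dots> = ?K * (card W1 + card W2) * Suc k" by (simp add: algebra_simps)
  also have "card W1 + card W2 = card W" using card_W1 card_W2 by simp
  finally show ?case .
qed

lemma pow2_ceiling_log_bound:
  assumes "2 \<le> n"
  obtains k :: nat where "n \<le> 2 ^ k" "real k \<le> 2 * log 2 (real n)"
proof
  define k where "k = nat \<lceil>log 2 (real n)\<rceil>"
  have "1 \<le> log 2 (real n)" using assms by simp
  then have k: "real k = \<lceil>log 2 (real n)\<rceil>" unfolding k_def by simp
  have "real n = 2 powr log 2 (real n)" using assms by simp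
  also have "\<dots> \<le> 2 powr real k" using k by (intro powr_mono) auto
  finally show "n \<le> 2 ^ k" by (simp add: powr_realpow flip: of_nat_le_iff)
  show "real k \<le> 2 * log 2 (real n)" using k \<open>1 \<le> log 2 (real n)\<close> by linarith
qed

theorem corollary3p3:
  fixes t :: nat
  assumes "t > 0"
  shows "\<exists>C::real. \<forall>V E. ordered_graph V E \<and> card V \<ge> 2 \<and>
           \<not> (\<exists>S T. S \<subseteq> V \<and> T \<subseteq> V \<and> card S = t \<and> card T = t \<and>
                 (\<forall>s\<in>S. \<forall>w\<in>T. double_cherry E s w))
         \<longrightarrow> real (card (edges E)) \<le> C * real (card V) * ln (real (card V))"
proof (intro exI allI impI)
  let ?K = "2 * t * t + 2"
  fix V E assume G: "ordered_graph V E \<and> card V \<ge> 2 \<and>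
    \<not> (\<exists>S T. S \<subseteq> V \<and> T \<subseteq> V \<and> card S = t \<and> card T = t \<and> (\<forall>s\<in>S. \<forall>w\<in>T. double_cherry E s w))"
  then have "edges E = {e \<in> edges E. e \<subseteq> V}"
    unfolding ordered_graph_def edges_def by auto
  moreover obtain k where k: "card V \<le> 2 ^ k" "real k \<le> 2 * log 2 (real (card V))"
    using G pow2_ceiling_log_bound by blast
  ultimately have "card (edges E) \<le> ?K * card V * k"
    using G card_edges_within_le[OF _ assms, of V E] unfolding ordered_graph_def has_dc_biclique_def by auto
  then have "real (card (edges E)) \<le> real ?K * real (card V) * real k"
    by (metis of_nat_le_iff of_nat_mult)
  also have "\<dots> \<le> real ?K * real (card V) * (2 * log 2 (real (card V)))"
    using k(2) by (intro mult_left_mono) auto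
  finally show "real (card (edges E)) \<le> 2 * real ?K / ln 2 * real (card V) * ln (real (card V))"
    by (simp add: log_def field_simps)
qed

end
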